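(* Let $X$ be a non-negative absolutely continuous random variable with PDF $f$, and write $l=\alpha\beta-\alpha-\beta+2$ and $G_{l}(X)=\int_0^\infty f^{l}(x)\,dx$. Let $\delta(\alpha)=\frac{1}{1-\alpha}$. (A) If $0<\alpha<1$, then: $R^\alpha_\beta(X)\le \delta(\alpha)G_{l}(X)$ if $0<\beta<1$ or $\beta\ge 2$; $R^\alpha_\beta(X)\ge \frac12 R^{\frac{\alpha+1}{2}}_{2\beta-1}(X)$ if $\beta\ge1$; and $R^\alpha_\beta(X)\le \frac12 R^{\frac{\alpha+1}{2}}_{2\beta-1}(X)$ if $0<\beta<1$. (B) If $\alpha>1$, then: $R^\alpha_\beta(X)\le \delta(\alpha)G_{l}(X)$ if $1<\beta<2$; $R^\alpha_\beta(X)\le \frac12 R^{\frac{\alpha+1}{2}}_{2\beta-1}(X)$ if $\beta\ge1$; and $R^\alpha_\beta(X)\ge \frac12 R^{\frac{\alpha+1}{2}}_{2\beta-1}(X)$ if $0<\beta<1$.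
   Context: For a non-negative absolutely continuous random variable $X$ with PDF $f$, $0<\alpha<\infty$, $\alpha\ne1$, $\beta>0$, the Rényi information generating function is $R^\alpha_\beta(X)=\frac{1}{1-\alpha}\left(\int_0^\infty f^\alpha(x)\,dx\right)^{\beta-1}$. $G_\gamma(X)=\int_0^\infty f^\gamma(x)dx$ is Golomb's information generating function. All integrals involved are assumed to exist and be finite. *)

theory Defs
  imports "HOL-Analysis.Analysis"
begin

definition is_pdf_nonneg :: "(real \<Rightarrow> real) \<Rightarrow> bool" where
  "is_pdf_nonneg f \<longleftrightarrow> f \<in> borel_measurable lborel \<and> (\<forall>x. 0 \<le> f x) \<and> (\<forall>x<0. f x = 0)
     \<and> set_integrable lborel {0..} f \<and> (LINT x:{0..}|lborel. f x) = 1"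

definition golomb_IGF :: "(real \<Rightarrow> real) \<Rightarrow> real \<Rightarrow> real" where
  "golomb_IGF f \<gamma> = (LINT x:{0..}|lborel. f x powr \<gamma>)"

definition renyi_IGF :: "(real \<Rightarrow> real) \<Rightarrow> real \<Rightarrow> real \<Rightarrow> real" where
  "renyi_IGF f \<alpha> \<beta> = 1 / (1 - \<alpha>) * (golomb_IGF f \<alpha>) powr (\<beta> - 1)"

definition delta_fn :: "real \<Rightarrow> real" where
  "delta_fn \<alpha> = 1 / (1 - \<alpha>)"

end

theory Submission
  imports Defs "HOL-Probability.Probability_Measure"
begin

text \<open>Under the probability measure with density \<open>f\<close>, \<open>G_\<gamma>\<close> is the expectation of
\<open>f^(\<gamma> - 1)\<close>. With \<open>p = \<beta> - 1\<close> one has \<open>l = (\<alpha> - 1) p + 1\<close>, so Jensen's inequality for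
\<open>t \<mapsto> t^p\<close> compares \<open>G_\<alpha>^p\<close> with \<open>G_l\<close> (the power is convex for \<open>p \<le> 0\<close> or \<open>p \<ge> 1\<close> and
concave for \<open>0 \<le> p \<le> 1\<close>), and Jensen for \<open>t \<mapsto> t^2\<close> gives \<open>G_((\<alpha>+1)/2)^2 \<le> G_\<alpha>\<close>.
As \<open>R^\<alpha>_\<beta> = \<delta>(\<alpha>) G_\<alpha>^p\<close> and \<open>R^((\<alpha>+1)/2)_(2\<beta>-1) / 2 = \<delta>(\<alpha>) (G_((\<alpha>+1)/2)^2)^p\<close>, all
claims follow from the monotonicity of \<open>t \<mapsto> t^p\<close> and the sign of \<open>\<delta>(\<alpha>)\<close>.\<close>

lemma convex_on_powr:
  fixes p :: real
  assumes "p \<le> 0 \<or> 1 \<le> p"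
  shows "convex_on {0<..} (\<lambda>x. x powr p)"
proof (rule f''_ge0_imp_convex)
  fix x :: real assume "x \<in> {0<..}"
  then show "((\<lambda>x. x powr p) has_real_derivative p * x powr (p - 1)) (at x)"
    and "((\<lambda>x. p * x powr (p - 1)) has_real_derivative p * ((p - 1) * x powr (p - 1 - 1))) (at x)"
    by (auto intro!: derivative_eq_intros)
  have "0 \<le> p * (p - 1)" using assms by (auto simp: zero_le_mult_iff)
  then show "0 \<le> p * ((p - 1) * x powr (p - 1 - 1))"
    by (metis mult.assoc mult_nonneg_nonneg powr_ge_zero)
qed simp

lemma concave_on_powr:
  fixes p :: real
  assumes "0 \<le> p" "p \<le> 1"
  shows "concave_on {0<..} (\<lambda>x. x powr p)"
  unfolding concave_on_def
proof (rule f''_ge0_imp_convex)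
  fix x :: real assume "x \<in> {0<..}"
  then show "((\<lambda>x. - (x powr p)) has_real_derivative - (p * x powr (p - 1))) (at x)"
    and "((\<lambda>x. - (p * x powr (p - 1))) has_real_derivative - (p * ((p - 1) * x powr (p - 1 - 1)))) (at x)"
    by (auto intro!: derivative_eq_intros)
  have "p * (p - 1) \<le> 0" using assms by (auto simp: mult_nonneg_nonpos)
  then show "0 \<le> - (p * ((p - 1) * x powr (p - 1 - 1)))"
    by (metis mult.assoc mult_nonpos_nonneg neg_0_le_iff_le powr_ge_zero)
qed simp

context prob_space
begin

lemma powr_expectation_le:
  fixes X :: "'a \<Rightarrow> real"
  assumes "integrable M X" "AE x in M. 0 < X x" "integrable M (\<lambda>x. X x powr p)"
    and "p \<le> 0 \<or> 1 \<le> p"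
  shows "expectation X powr p \<le> expectation (\<lambda>x. X x powr p)"
  using assms convex_on_powr by (intro jensens_inequality[where I = "{0<..}" and a = 0]) auto

lemma expectation_powr_le:
  fixes X :: "'a \<Rightarrow> real"
  assumes "integrable M X" "AE x in M. 0 < X x" "integrable M (\<lambda>x. X x powr p)"
    and "0 \<le> p" "p \<le> 1"
  shows "expectation (\<lambda>x. X x powr p) \<le> expectation X powr p"
proof -
  have "- (expectation X powr p) \<le> expectation (\<lambda>x. - (X x powr p))"
    using assms concave_on_powr[of p]
    by (intro jensens_inequality[where I = "{0<..}" and a = 0]) (auto simp: concave_on_def)
  then show ?thesis by simp
qed

end

lemma pdf_indicator_absorb:
  fixes h :: "real \<Rightarrow> real"
  assumes "is_pdf_nonneg f" "h 0 = 0"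
  shows "(\<lambda>x. indicator {0..} x * h (f x)) = (\<lambda>x. h (f x))"
proof
  fix x :: real
  show "indicator {0..} x * h (f x) = h (f x)"
    using assms by (cases "0 \<le> x") (auto simp: is_pdf_nonneg_def)
qed

lemma prob_space_pdf:
  assumes "is_pdf_nonneg f"
  shows "prob_space (density lborel f)"
proof
  have "integrable lborel f" "integral\<^sup>L lborel f = 1"
    using assms pdf_indicator_absorb[OF assms, of "\<lambda>y. y"]
    by (auto simp: is_pdf_nonneg_def set_integrable_def set_lebesgue_integral_def)
  then show "emeasure (density lborel f) (space (density lborel f)) = 1"
    using assms by (simp add: emeasure_density is_pdf_nonneg_def nn_integral_eq_integral)
qed

lemma AE_pdf_powr_pos:
  assumes "is_pdf_nonneg f"
  shows "AE x in density lborel f. 0 < f x powr a"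
  using assms by (simp add: AE_density is_pdf_nonneg_def)

lemma golomb_IGF_eq_expectation:
  assumes "is_pdf_nonneg f"
  shows "golomb_IGF f \<gamma> = (\<integral>x. f x powr (\<gamma> - 1) \<partial>density lborel f)"
proof -
  have [measurable]: "f \<in> borel_measurable borel" and nonneg: "\<And>x. 0 \<le> f x"
    using assms by (auto simp: is_pdf_nonneg_def)
  have "(\<integral>x. f x powr (\<gamma> - 1) \<partial>density lborel f) = (\<integral>x. f x * f x powr (\<gamma> - 1) \<partial>lborel)"
    using nonneg by (subst integral_density) auto
  also have "\<dots> = (\<integral>x. indicator {0..} x * f x powr \<gamma> \<partial>lborel)"
    using nonneg pdf_indicator_absorb[OF assms, of "\<lambda>y. y powr \<gamma>"] by (simp add: powr_mult_base)
  finally show ?thesis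
    by (simp add: golomb_IGF_def set_lebesgue_integral_def)
qed

lemma integrable_pdf_powr_iff:
  assumes "is_pdf_nonneg f"
  shows "integrable (density lborel f) (\<lambda>x. f x powr (\<gamma> - 1)) \<longleftrightarrow> set_integrable lborel {0..} (\<lambda>x. f x powr \<gamma>)"
proof -
  have [measurable]: "f \<in> borel_measurable borel" and nonneg: "\<And>x. 0 \<le> f x"
    using assms by (auto simp: is_pdf_nonneg_def)
  have "integrable (density lborel f) (\<lambda>x. f x powr (\<gamma> - 1)) \<longleftrightarrow> integrable lborel (\<lambda>x. f x * f x powr (\<gamma> - 1))"
    using nonneg by (subst integrable_density) auto
  also have "\<dots> \<longleftrightarrow> integrable lborel (\<lambda>x. indicator {0..} x * f x powr \<gamma>)"
    using nonneg pdf_indicator_absorb[OF assms, of "\<lambda>y. y powr \<gamma>"] by (simp add: powr_mult_base)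
  finally show ?thesis
    by (simp add: set_integrable_def)
qed

lemma golomb_IGF_pos:
  assumes "is_pdf_nonneg f" "set_integrable lborel {0..} (\<lambda>x. f x powr \<gamma>)"
  shows "0 < golomb_IGF f \<gamma>"
proof -
  interpret prob_space "density lborel f" by (rule prob_space_pdf[OF assms(1)])
  show ?thesis
    using assms AE_pdf_powr_pos[OF assms(1)]
    by (simp add: golomb_IGF_eq_expectation integrable_pdf_powr_iff expectation_greater)
qed

lemma golomb_IGF_powr_le:
  assumes "is_pdf_nonneg f" "p \<le> 0 \<or> 1 \<le> p"
    and "set_integrable lborel {0..} (\<lambda>x. f x powr \<gamma>)"
    and "set_integrable lborel {0..} (\<lambda>x. f x powr ((\<gamma> - 1) * p + 1))"
  shows "golomb_IGF f \<gamma> powr p \<le> golomb_IGF f ((\<gamma> - 1) * p + 1)"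
proof -
  interpret prob_space "density lborel f" by (rule prob_space_pdf[OF assms(1)])
  have X: "integrable (density lborel f) (\<lambda>x. f x powr (\<gamma> - 1))"
    using assms(3) integrable_pdf_powr_iff[OF assms(1)] by blast
  have Xp: "integrable (density lborel f) (\<lambda>x. (f x powr (\<gamma> - 1)) powr p)"
    using assms(4) integrable_pdf_powr_iff[OF assms(1), of "(\<gamma> - 1) * p + 1"] by (simp add: powr_powr)
  from powr_expectation_le[OF X AE_pdf_powr_pos[OF assms(1)] Xp assms(2)] show ?thesis
    by (simp add: golomb_IGF_eq_expectation[OF assms(1)] powr_powr)
qed

lemma golomb_IGF_le_powr:
  assumes "is_pdf_nonneg f" "0 \<le> p" "p \<le> 1"
    and "set_integrable lborel {0..} (\<lambda>x. f x powr \<gamma>)"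
    and "set_integrable lborel {0..} (\<lambda>x. f x powr ((\<gamma> - 1) * p + 1))"
  shows "golomb_IGF f ((\<gamma> - 1) * p + 1) \<le> golomb_IGF f \<gamma> powr p"
proof -
  interpret prob_space "density lborel f" by (rule prob_space_pdf[OF assms(1)])
  have X: "integrable (density lborel f) (\<lambda>x. f x powr (\<gamma> - 1))"
    using assms(4) integrable_pdf_powr_iff[OF assms(1)] by blast
  have Xp: "integrable (density lborel f) (\<lambda>x. (f x powr (\<gamma> - 1)) powr p)"
    using assms(5) integrable_pdf_powr_iff[OF assms(1), of "(\<gamma> - 1) * p + 1"] by (simp add: powr_powr)
  from expectation_powr_le[OF X AE_pdf_powr_pos[OF assms(1)] Xp assms(2,3)] show ?thesis
    by (simp add: golomb_IGF_eq_expectation[OF assms(1)] powr_powr)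
qed

theorem proposition2p3:
  fixes f :: "real \<Rightarrow> real" and \<alpha> \<beta> l :: real
  assumes pdf: "is_pdf_nonneg f"
    and alpha: "0 < \<alpha>" "\<alpha> \<noteq> 1" and beta: "0 < \<beta>"
    and l_def: "l = \<alpha> * \<beta> - \<alpha> - \<beta> + 2"
    and int_alpha: "set_integrable lborel {0..} (\<lambda>x. f x powr \<alpha>)"
    and int_l: "set_integrable lborel {0..} (\<lambda>x. f x powr l)"
    and int_half: "set_integrable lborel {0..} (\<lambda>x. f x powr ((\<alpha> + 1) / 2))"
  shows
    "(\<alpha> < 1 \<longrightarrow>
        (((0 < \<beta> \<and> \<beta> < 1) \<or> 2 \<le> \<beta>) \<longrightarrow> renyi_IGF f \<alpha> \<beta> \<le> delta_fn \<alpha> * golomb_IGF f l) \<and>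
        (1 \<le> \<beta> \<longrightarrow> renyi_IGF f \<alpha> \<beta> \<ge> 1/2 * renyi_IGF f ((\<alpha> + 1) / 2) (2 * \<beta> - 1)) \<and>
        (\<beta> < 1 \<longrightarrow> renyi_IGF f \<alpha> \<beta> \<le> 1/2 * renyi_IGF f ((\<alpha> + 1) / 2) (2 * \<beta> - 1)))
   \<and> (1 < \<alpha> \<longrightarrow>
        ((1 < \<beta> \<and> \<beta> < 2) \<longrightarrow> renyi_IGF f \<alpha> \<beta> \<le> delta_fn \<alpha> * golomb_IGF f l) \<and>
        (1 \<le> \<beta> \<longrightarrow> renyi_IGF f \<alpha> \<beta> \<le> 1/2 * renyi_IGF f ((\<alpha> + 1) / 2) (2 * \<beta> - 1)) \<and>
        (\<beta> < 1 \<longrightarrow> renyi_IGF f \<alpha> \<beta> \<ge> 1/2 * renyi_IGF f ((\<alpha> + 1) / 2) (2 * \<beta> - 1)))"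
proof -
  define p where "p = \<beta> - 1"
  define A where "A = golomb_IGF f \<alpha>"
  define B where "B = golomb_IGF f ((\<alpha> + 1) / 2)"
  define G where "G = golomb_IGF f l"
  have l_eq: "l = (\<alpha> - 1) * p + 1" and half_sq: "((\<alpha> + 1) / 2 - 1) * 2 + 1 = \<alpha>"
    by (simp_all add: l_def p_def field_simps)
  have "0 < B" unfolding B_def by (rule golomb_IGF_pos[OF pdf int_half])
  have "B powr 2 \<le> A"
    using golomb_IGF_powr_le[OF pdf _ int_half, of 2, unfolded half_sq] int_alpha by (simp add: A_def B_def)
  then have B_sq_le: "B\<^sup>2 \<le> A" using \<open>0 < B\<close> by simp
  have R: "renyi_IGF f \<alpha> \<beta> = delta_fn \<alpha> * A powr p"
    by (simp add: renyi_IGF_def delta_fn_def A_def p_def)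
  have "B powr (2 * \<beta> - 1 - 1) = (B\<^sup>2) powr p"
    using \<open>0 < B\<close> by (simp add: powr_powr p_def algebra_simps flip: powr_numeral)
  then have R_half: "1/2 * renyi_IGF f ((\<alpha> + 1) / 2) (2 * \<beta> - 1) = delta_fn \<alpha> * (B\<^sup>2) powr p"
    using alpha by (simp add: renyi_IGF_def delta_fn_def B_def field_simps)
  have convex_case: "A powr p \<le> G" if "p \<le> 0 \<or> 1 \<le> p"
    using golomb_IGF_powr_le[OF pdf that int_alpha] int_l by (simp add: A_def G_def l_eq)
  have concave_case: "G \<le> A powr p" if "0 \<le> p" "p \<le> 1"
    using golomb_IGF_le_powr[OF pdf that int_alpha] int_l by (simp add: A_def G_def l_eq)
  have "(B\<^sup>2) powr p \<le> A powr p" if "0 \<le> p"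
    using \<open>0 < B\<close> B_sq_le that by (simp add: powr_mono2)
  moreover have "A powr p \<le> (B\<^sup>2) powr p" if "p \<le> 0"
    using \<open>0 < B\<close> B_sq_le that by (simp add: powr_mono2')
  moreover have "\<alpha> < 1 \<Longrightarrow> 0 < delta_fn \<alpha>" "1 < \<alpha> \<Longrightarrow> delta_fn \<alpha> < 0"
    by (simp_all add: delta_fn_def)
  ultimately show ?thesis
    unfolding R R_half G_def[symmetric] using convex_case concave_case
    by (auto simp: p_def intro: mult_left_mono mult_left_mono_neg)
qed

end
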